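(* Let $q=(q_1,q_2,q_3)\in K^3$. There exists a linear endomorphism $\varphi_q$ of $\mathbf{WQSym}$ such that $\varphi_q\circ L=\Gamma_q$ if, and only if, $q=(1,0,0)$ or $q=(0,1,0)$.
   Context: Let $K$ be a field; convention $0^0=1$. For $n\geq0$, $[n]=\{1,\ldots,n\}$, $\mathbb{T}_n$ is the set of topologies on $[n]$ and $\mathcal{H}_{\mathbb{T}}$ the $K$-vector space with basis $\bigsqcup_n\mathbb{T}_n$. For a topology $\mathcal{T}$ on $[n]$: $i\leq_{\mathcal{T}}j$ iff every open set containing $i$ contains $j$; $i\sim_{\mathcal{T}}j$ iff $i\leq_{\mathcal{T}}j$ and $j\leq_{\mathcal{T}}i$; $i<_{\mathcal{T}}j$ iff $i\leq_{\mathcal{T}}j$ and not $j\leq_{\mathcal{T}}i$. A packed word of length $n$ is a word $f=f(1)\ldots f(n)$ of positive integers with $\{f(1),\ldots,f(n)\}=[\max f]$; $\mathbf{WQSym}$ is the $K$-vector space with basis the packed words. A linear extension of $\mathcal{T}\in\mathbb{T}_n$ is a packed word $f$ of length $n$ with $f(i)=f(j)\Leftrightarrow i\sim_{\mathcal{T}}j$ and $i<_{\mathcal{T}}j\Rightarrow f(i)<f(j)$; $\mathcal{L}(\mathcal{T})$ is their set and $L$ is the linear map $\mathcal{H}_{\mathbb{T}}\to\mathbf{WQSym}$, $L(\mathcal{T})=\sum_{f\in\mathcal{L}(\mathcal{T})}f$. A generalized T-partition of $\mathcal{T}\in\mathbb{T}_n$ is a packed word $f$ of length $n$ with $i\leq_{\mathcal{T}}j\Rightarrow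 f(i)\leq f(j)$; $\mathcal{P}(\mathcal{T})$ is their set. For $f\in\mathcal{P}(\mathcal{T})$: $\ell_1(f)=\sharp\{(i,j)\mid i<_{\mathcal{T}}j,\ i<j,\ f(i)=f(j)\}$; $\ell_2(f)=\sharp\{(i,j)\mid i<_{\mathcal{T}}j,\ i>j,\ f(i)=f(j)\}$; $\ell_3(f)=\sharp\{(i,j,k)\mid i<j<k,\ i\sim_{\mathcal{T}}k,\ \text{not }i\sim_{\mathcal{T}}j,\ \text{not }j\sim_{\mathcal{T}}k,\ f(i)=f(j)=f(k)\}$. $\Gamma_q:\mathcal{H}_{\mathbb{T}}\to\mathbf{WQSym}$ is the linear map $\Gamma_q(\mathcal{T})=\sum_{f\in\mathcal{P}(\mathcal{T})}q_1^{\ell_1(f)}q_2^{\ell_2(f)}q_3^{\ell_3(f)}f$. *)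

theory Defs
  imports "HOL-Analysis.Analysis"
begin

text \<open>Topologies on [n] = {1..n} are the library topologies on nat with topspace {1..n}.
  Words f(1)...f(n) are lists; the letter f(i) is the list entry at position i-1.\<close>

definition top_on :: "nat \<Rightarrow> nat topology \<Rightarrow> bool" where
  "top_on n T \<longleftrightarrow> topspace T = {1..n}"

definition is_fintop :: "nat topology \<Rightarrow> bool" where
  "is_fintop T \<longleftrightarrow> (\<exists>n. top_on n T)"

definition tle :: "nat topology \<Rightarrow> nat \<Rightarrow> nat \<Rightarrow> bool" where
  "tle T i j \<longleftrightarrow> (\<forall>U. openin T U \<and> i \<in> U \<longrightarrow> j \<in> U)"

definition tsim :: "nat topology \<Rightarrow> nat \<Rightarrow> nat \<Rightarrow> bool" where
  "tsim T i j \<longleftrightarrow> tle T i j \<and> tle T j i"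

definition tlt :: "nat topology \<Rightarrow> nat \<Rightarrow> nat \<Rightarrow> bool" where
  "tlt T i j \<longleftrightarrow> tle T i j \<and> \<not> tle T j i"

definition letter :: "nat list \<Rightarrow> nat \<Rightarrow> nat" where
  "letter f i = f ! (i - 1)"

definition packed :: "nat list \<Rightarrow> bool" where
  "packed f \<longleftrightarrow> (\<exists>m. set f = {1..m})"

definition lin_ext :: "nat topology \<Rightarrow> nat list set" where
  "lin_ext T = {f. packed f \<and> top_on (length f) T \<and>
     (\<forall>i\<in>{1..length f}. \<forall>j\<in>{1..length f}.
        (letter f i = letter f j \<longleftrightarrow> tsim T i j) \<and>
        (tlt T i j \<longrightarrow> letter f i < letter f j))}"

definition gen_part :: "nat topology \<Rightarrow> nat list set" where
  "gen_part T = {f. packed f \<and> top_on (length f) T \<and>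
     (\<forall>i\<in>{1..length f}. \<forall>j\<in>{1..length f}. tle T i j \<longrightarrow> letter f i \<le> letter f j)}"

definition ell1 :: "nat topology \<Rightarrow> nat list \<Rightarrow> nat" where
  "ell1 T f = card {(i, j). i \<in> {1..length f} \<and> j \<in> {1..length f} \<and>
      tlt T i j \<and> i < j \<and> letter f i = letter f j}"

definition ell2 :: "nat topology \<Rightarrow> nat list \<Rightarrow> nat" where
  "ell2 T f = card {(i, j). i \<in> {1..length f} \<and> j \<in> {1..length f} \<and>
      tlt T i j \<and> i > j \<and> letter f i = letter f j}"

definition ell3 :: "nat topology \<Rightarrow> nat list \<Rightarrow> nat" where
  "ell3 T f = card {(i, j, k). i \<in> {1..length f} \<and> j \<in> {1..length f} \<and> k \<in> {1..length f} \<and>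
      i < j \<and> j < k \<and> tsim T i k \<and> \<not> tsim T i j \<and> \<not> tsim T j k \<and>
      letter f i = letter f j \<and> letter f j = letter f k}"

text \<open>The vector space H_T: finitely supported K-valued functions on topologies on some [n]
  (coordinates w.r.t. the basis). WQSym: finitely supported K-valued functions on packed words.\<close>

definition HT :: "(nat topology \<Rightarrow> 'a::field) set" where
  "HT = {x. finite {T. x T \<noteq> 0} \<and> (\<forall>T. x T \<noteq> 0 \<longrightarrow> is_fintop T)}"

definition WQSym :: "(nat list \<Rightarrow> 'a::field) set" where
  "WQSym = {x. finite {w. x w \<noteq> 0} \<and> (\<forall>w. x w \<noteq> 0 \<longrightarrow> packed w)}"

definition linear_endo_WQSym :: "((nat list \<Rightarrow> 'a::field) \<Rightarrow> (nat list \<Rightarrow> 'a)) \<Rightarrow> bool" where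
  "linear_endo_WQSym \<phi> \<longleftrightarrow>
     (\<forall>x\<in>WQSym. \<phi> x \<in> WQSym) \<and>
     (\<forall>x\<in>WQSym. \<forall>y\<in>WQSym. \<phi> (\<lambda>w. x w + y w) = (\<lambda>w. \<phi> x w + \<phi> y w)) \<and>
     (\<forall>c. \<forall>x\<in>WQSym. \<phi> (\<lambda>w. c * x w) = (\<lambda>w. c * \<phi> x w))"

definition L_basis :: "nat topology \<Rightarrow> nat list \<Rightarrow> 'a::field" where
  "L_basis T = (\<lambda>w. if w \<in> lin_ext T then 1 else 0)"

definition Gamma_basis :: "'a::field \<Rightarrow> 'a \<Rightarrow> 'a \<Rightarrow> nat topology \<Rightarrow> nat list \<Rightarrow> 'a" where
  "Gamma_basis q1 q2 q3 T = (\<lambda>w. if w \<in> gen_part T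
       then q1 ^ ell1 T w * q2 ^ ell2 T w * q3 ^ ell3 T w else 0)"

definition L_map :: "(nat topology \<Rightarrow> 'a::field) \<Rightarrow> nat list \<Rightarrow> 'a" where
  "L_map x = (\<lambda>w. \<Sum>T\<in>{T. x T \<noteq> 0}. x T * L_basis T w)"

definition Gamma_map :: "'a::field \<Rightarrow> 'a \<Rightarrow> 'a \<Rightarrow> (nat topology \<Rightarrow> 'a) \<Rightarrow> nat list \<Rightarrow> 'a" where
  "Gamma_map q1 q2 q3 x = (\<lambda>w. \<Sum>T\<in>{T. x T \<noteq> 0}. x T * Gamma_basis q1 q2 q3 T w)"

end

theory Submission
  imports Defs
begin

text \<open>For a packed word \<open>f\<close> let \<open>T\<^sub>f\<close> be the topology whose preorder compares the letters of
  \<open>f\<close>. Then \<open>f\<close> is the only linear extension of \<open>T\<^sub>f\<close>, so \<open>L\<close> kills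
  \<open>T - (\<Sum>f\<in>\<L>(T). T\<^sub>f)\<close>, and \<open>\<Gamma>\<^sub>q\<close> factors through \<open>L\<close> if and only if
  \<open>\<Gamma>\<^sub>q(T) = (\<Sum>f\<in>\<L>(T). \<Gamma>\<^sub>q(T\<^sub>f))\<close> for every \<open>T\<close>.

  For \<open>q = (1,0,0)\<close>, \<open>\<Gamma>\<^sub>q(T)\<close> is the sum of the \<open>T\<close>-partitions \<open>w\<close> with
  \<open>\<ell>\<^sub>2(w) = \<ell>\<^sub>3(w) = 0\<close>. Breaking the ties of such a \<open>w\<close> first by \<open>\<sim>\<^sub>T\<close>-classes
  and then by position gives the unique linear extension \<open>f\<close> of \<open>T\<close> for which \<open>w\<close> is also
  counted in \<open>\<Gamma>\<^sub>q(T\<^sub>f)\<close>, so the identity holds; \<open>q = (0,1,0)\<close> is the same argument with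
  the order of positions reversed.

  Conversely, the identity evaluated at the constant words for the discrete topology on \<open>[2]\<close>,
  the topology on \<open>[3]\<close> with \<open>1 < 3\<close>, and the one with \<open>1 \<sim> 3\<close> yields
  \<open>q\<^sub>1 + q\<^sub>2 = 1\<close>, \<open>q\<^sub>1 = q\<^sub>1\<^sup>3 + 2 q\<^sub>1\<^sup>2 q\<^sub>2\<close> and
  \<open>q\<^sub>3 = 2 q\<^sub>1 q\<^sub>2 q\<^sub>3\<close>, whose only solutions are \<open>(1,0,0)\<close> and \<open>(0,1,0)\<close>.\<close>

section \<open>Topologies of preorders on \<open>[n]\<close>\<close>

definition preorder_upto :: "nat \<Rightarrow> (nat \<Rightarrow> nat \<Rightarrow> bool) \<Rightarrow> bool" where
  "preorder_upto n P \<longleftrightarrow> (\<forall>i\<in>{1..n}. P i i) \<and>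
     (\<forall>i\<in>{1..n}. \<forall>j\<in>{1..n}. \<forall>k\<in>{1..n}. P i j \<longrightarrow> P j k \<longrightarrow> P i k)"

definition upset_topology :: "nat \<Rightarrow> (nat \<Rightarrow> nat \<Rightarrow> bool) \<Rightarrow> nat topology" where
  "upset_topology n P = topology (\<lambda>U. U \<subseteq> {1..n} \<and> (\<forall>i\<in>U. \<forall>j\<in>{1..n}. P i j \<longrightarrow> j \<in> U))"

lemma openin_upset_topology:
  "openin (upset_topology n P) U \<longleftrightarrow> U \<subseteq> {1..n} \<and> (\<forall>i\<in>U. \<forall>j\<in>{1..n}. P i j \<longrightarrow> j \<in> U)"
proof -
  have "istopology (\<lambda>U. U \<subseteq> {1..n} \<and> (\<forall>i\<in>U. \<forall>j\<in>{1..n}. P i j \<longrightarrow> j \<in> U))"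
    unfolding istopology_def by blast
  then show ?thesis unfolding upset_topology_def by simp
qed

lemma top_on_upset_topology: "top_on n (upset_topology n P)"
  unfolding top_on_def topspace_def openin_upset_topology by blast

lemma tle_upset_topology:
  assumes P: "preorder_upto n P" and ij: "i \<in> {1..n}" "j \<in> {1..n}"
  shows "tle (upset_topology n P) i j \<longleftrightarrow> P i j"
proof
  assume "tle (upset_topology n P) i j"
  moreover have "openin (upset_topology n P) {k\<in>{1..n}. P i k}"
    using P ij unfolding openin_upset_topology preorder_upto_def by blast
  ultimately show "P i j" using P ij unfolding tle_def preorder_upto_def by blast
qed (use ij in \<open>auto simp: tle_def openin_upset_topology\<close>)

lemma tsim_upset_topology:
  "preorder_upto n P \<Longrightarrow> i \<in> {1..n} \<Longrightarrow> j \<in> {1..n} \<Longrightarrow>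
     tsim (upset_topology n P) i j \<longleftrightarrow> P i j \<and> P j i"
  unfolding tsim_def by (simp add: tle_upset_topology)

lemma tlt_upset_topology:
  "preorder_upto n P \<Longrightarrow> i \<in> {1..n} \<Longrightarrow> j \<in> {1..n} \<Longrightarrow>
     tlt (upset_topology n P) i j \<longleftrightarrow> P i j \<and> \<not> P j i"
  unfolding tlt_def by (simp add: tle_upset_topology)

lemma top_on_unique: "top_on n T \<Longrightarrow> top_on m T \<Longrightarrow> n = m"
  unfolding top_on_def by (metis card_atLeastAtMost diff_Suc_1)

lemma tle_trans: "tle T i j \<Longrightarrow> tle T j k \<Longrightarrow> tle T i k"
  unfolding tle_def by blast

lemma tsim_refl [simp]: "tsim T i i"
  unfolding tsim_def tle_def by blast

lemma tsim_sym: "tsim T i j \<Longrightarrow> tsim T j i"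
  unfolding tsim_def by simp

lemma tsim_trans: "tsim T i j \<Longrightarrow> tsim T j k \<Longrightarrow> tsim T i k"
  unfolding tsim_def using tle_trans by blast

lemma tle_iff_tsim_or_tlt: "tle T i j \<longleftrightarrow> tsim T i j \<or> tlt T i j"
  unfolding tsim_def tlt_def by blast

lemma tlt_irrefl [simp]: "\<not> tlt T i i"
  unfolding tlt_def by simp

lemma tlt_not_tsim: "tlt T i j \<Longrightarrow> \<not> tsim T j i"
  unfolding tsim_def tlt_def by blast

section \<open>Packed words\<close>

lemma letter_in_set: "i \<in> {1..length f} \<Longrightarrow> letter f i \<in> set f"
  unfolding letter_def by auto

lemma set_eq_image_letter: "set f = letter f ` {1..length f}"
proof (intro equalityI subsetI)
  fix x assume "x \<in> set f"
  then obtain k where "k < length f" "f ! k = x" by (auto simp: in_set_conv_nth)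
  then show "x \<in> letter f ` {1..length f}"
    unfolding letter_def by (intro image_eqI[of _ _ "Suc k"]) auto
qed (auto simp: letter_in_set)

lemma letter_map_upt: "i \<in> {1..n} \<Longrightarrow> letter (map g [1..<n+1]) i = g i"
  unfolding letter_def by (subst nth_map) (auto simp del: upt_Suc)

lemma packedI: "set f = {1..m} \<Longrightarrow> packed f"
  unfolding packed_def by blast

lemma packed_letters_bounded: "packed f \<Longrightarrow> x \<in> set f \<Longrightarrow> 1 \<le> x \<and> x \<le> length f"
  unfolding packed_def by (metis atLeastAtMost_iff card_atLeastAtMost card_length diff_Suc_1 order_trans)

lemma packed_letter_eq_card:
  assumes "packed f" "i \<in> {1..length f}"
  shows "letter f i = card (letter f ` {j\<in>{1..length f}. letter f j \<le> letter f i})"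
proof -
  obtain m where m: "set f = {1..m}" using assms(1) unfolding packed_def by blast
  have "letter f ` {j\<in>{1..length f}. letter f j \<le> letter f i} = {x\<in>set f. x \<le> letter f i}"
    using set_eq_image_letter[of f] by auto
  also have "\<dots> = {1..letter f i}"
    using letter_in_set[OF assms(2)] unfolding m by auto
  finally show ?thesis by simp
qed

lemma card_image_le_if_factors:
  assumes "finite S" "\<And>j k. j \<in> S \<Longrightarrow> k \<in> S \<Longrightarrow> f j = f k \<Longrightarrow> g j = g k"
  shows "card (g ` S) \<le> card (f ` S)"
proof -
  have "g j = g (inv_into S f (f j))" if "j \<in> S" for j
  proof -
    have "inv_into S f (f j) \<in> S" "f (inv_into S f (f j)) = f j"
      using that by (auto intro: inv_into_into f_inv_into_f)
    then show ?thesis using assms(2) that by metis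
  qed
  then have "g ` S = (\<lambda>v. g (inv_into S f v)) ` f ` S"
    unfolding image_image by (rule image_cong[OF refl])
  then show ?thesis using assms(1) by (simp add: card_image_le)
qed

lemma packed_eqI:
  assumes f: "packed f" and g: "packed g" and len: "length f = length g"
    and pattern: "\<And>i j. i \<in> {1..length f} \<Longrightarrow> j \<in> {1..length f} \<Longrightarrow>
        letter f i \<le> letter f j \<longleftrightarrow> letter g i \<le> letter g j"
  shows "f = g"
proof (rule nth_equalityI)
  show "length f = length g" by (fact len)
  fix k assume k: "k < length f"
  define i where "i = Suc k"
  have i: "i \<in> {1..length f}" using k unfolding i_def by simp
  define S where "S = {j\<in>{1..length f}. letter f j \<le> letter f i}"
  have S_g: "S = {j\<in>{1..length g}. letter g j \<le> letter g i}"
    unfolding S_def using pattern i len by auto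
  have same_ties: "letter f j = letter f j' \<longleftrightarrow> letter g j = letter g j'" if "j \<in> S" "j' \<in> S" for j j'
    unfolding order_eq_iff using that pattern[of j j'] pattern[of j' j] by (simp add: S_def)
  have "letter f i = card (letter f ` S)"
    unfolding S_def using packed_letter_eq_card[OF f i] .
  also have "\<dots> = card (letter g ` S)"
  proof (rule antisym)
    have "finite S" unfolding S_def by simp
    then show "card (letter f ` S) \<le> card (letter g ` S)" "card (letter g ` S) \<le> card (letter f ` S)"
      by (auto intro!: card_image_le_if_factors simp: same_ties)
  qed
  also have "\<dots> = letter g i"
    unfolding S_g using packed_letter_eq_card[OF g] i len by simp
  finally show "f ! k = g ! k" unfolding letter_def i_def by simp
qed

definition rank_in :: "nat set \<Rightarrow> nat \<Rightarrow> nat" where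
  "rank_in U a = card {x\<in>U. x \<le> a}"

lemma rank_in_le_iff:
  assumes U: "finite U" and ab: "a \<in> U" "b \<in> U"
  shows "rank_in U a \<le> rank_in U b \<longleftrightarrow> a \<le> b"
proof
  assume "a \<le> b"
  then show "rank_in U a \<le> rank_in U b" unfolding rank_in_def using U by (intro card_mono) auto
next
  assume le: "rank_in U a \<le> rank_in U b"
  show "a \<le> b"
  proof (rule ccontr)
    assume "\<not> a \<le> b"
    then have "{x\<in>U. x \<le> b} \<subset> {x\<in>U. x \<le> a}" using ab by auto
    then have "rank_in U b < rank_in U a" unfolding rank_in_def using U by (intro psubset_card_mono) auto
    with le show False by simp
  qed
qed

lemma rank_in_image:
  assumes U: "finite U"
  shows "rank_in U ` U = {1..card U}"
proof -
  have "rank_in U a \<in> {1..card U}" if "a \<in> U" for a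
  proof -
    have "1 \<le> rank_in U a" unfolding rank_in_def using U that by (auto simp: Suc_le_eq card_gt_0_iff)
    moreover have "rank_in U a \<le> card U" unfolding rank_in_def using U by (intro card_mono) auto
    ultimately show ?thesis by simp
  qed
  moreover have "inj_on (rank_in U) U"
    by (rule inj_onI) (metis U rank_in_le_iff order_antisym order_refl)
  ultimately show ?thesis
    by (intro card_subset_eq) (auto simp: card_image)
qed

lemma packed_word_with_pattern:
  fixes u :: "nat \<Rightarrow> nat"
  shows "\<exists>f. packed f \<and> length f = n \<and>
           (\<forall>i\<in>{1..n}. \<forall>j\<in>{1..n}. letter f i \<le> letter f j \<longleftrightarrow> u i \<le> u j)"
proof -
  define U where "U = u ` {1..n}"
  define f where "f = map (\<lambda>i. rank_in U (u i)) [1..<n+1]"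
  have U: "finite U" unfolding U_def by simp
  have "set f = rank_in U ` U" unfolding f_def U_def by auto
  then have "packed f" using rank_in_image[OF U] by (rule packedI[OF trans])
  moreover have "letter f i = rank_in U (u i)" if "i \<in> {1..n}" for i
    unfolding f_def using letter_map_upt[OF that] .
  ultimately show ?thesis
    using rank_in_le_iff[OF U] unfolding U_def by (intro exI[of _ f]) (auto simp: f_def)
qed

lemma packed_word_of_total_preorder:
  assumes total: "\<And>i j. i \<in> {1..n} \<Longrightarrow> j \<in> {1..n} \<Longrightarrow> R i j \<or> R j i"
    and transitive: "\<And>i j k. i \<in> {1..n} \<Longrightarrow> j \<in> {1..n} \<Longrightarrow> k \<in> {1..n} \<Longrightarrow>
      R i j \<Longrightarrow> R j k \<Longrightarrow> R i k"
  shows "\<exists>f. packed f \<and> length f = n \<and> (\<forall>i\<in>{1..n}. \<forall>j\<in>{1..n}. letter f i \<le> letter f j \<longleftrightarrow> R i j)"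
proof -
  define below where "below i = {k\<in>{1..n}. R k i}" for i
  have "card (below i) \<le> card (below j) \<longleftrightarrow> R i j" if ij: "i \<in> {1..n}" "j \<in> {1..n}" for i j
  proof
    assume "R i j"
    then have "below i \<subseteq> below j" using transitive ij unfolding below_def by blast
    then show "card (below i) \<le> card (below j)" unfolding below_def by (intro card_mono) auto
  next
    assume le: "card (below i) \<le> card (below j)"
    show "R i j"
    proof (rule ccontr)
      assume "\<not> R i j"
      moreover have "R j i" "R i i" using total ij calculation by blast+
      ultimately have "below j \<subset> below i" using transitive ij unfolding below_def by blast
      then have "card (below j) < card (below i)" unfolding below_def by (intro psubset_card_mono) auto
      with le show False by simp
    qed
  qed
  then show ?thesis using packed_word_with_pattern[of n "\<lambda>i. card (below i)"] by auto
qed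

lemma lin_ext_packed: "f \<in> lin_ext T \<Longrightarrow> packed f"
  unfolding lin_ext_def by simp

definition word_topology :: "nat list \<Rightarrow> nat topology" where
  "word_topology f = upset_topology (length f) (\<lambda>i j. letter f i \<le> letter f j)"

lemma preorder_upto_letters: "preorder_upto n (\<lambda>i j. letter f i \<le> letter f j)"
  unfolding preorder_upto_def by auto

lemma tle_word_topology:
  "i \<in> {1..length f} \<Longrightarrow> j \<in> {1..length f} \<Longrightarrow> tle (word_topology f) i j \<longleftrightarrow> letter f i \<le> letter f j"
  unfolding word_topology_def by (simp add: tle_upset_topology preorder_upto_letters)

lemma tsim_word_topology:
  "i \<in> {1..length f} \<Longrightarrow> j \<in> {1..length f} \<Longrightarrow> tsim (word_topology f) i j \<longleftrightarrow> letter f i = letter f j"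
  unfolding word_topology_def by (auto simp add: tsim_upset_topology preorder_upto_letters)

lemma tlt_word_topology:
  "i \<in> {1..length f} \<Longrightarrow> j \<in> {1..length f} \<Longrightarrow> tlt (word_topology f) i j \<longleftrightarrow> letter f i < letter f j"
  unfolding word_topology_def by (auto simp add: tlt_upset_topology preorder_upto_letters)

lemma top_on_word_topology: "top_on (length f) (word_topology f)"
  unfolding word_topology_def by (rule top_on_upset_topology)

lemma top_on_word_topology_iff: "top_on n (word_topology f) \<longleftrightarrow> n = length f"
  using top_on_word_topology top_on_unique by metis

lemma is_fintop_word_topology: "is_fintop (word_topology f)"
  unfolding is_fintop_def using top_on_word_topology by blast

lemma lin_ext_word_topology:
  assumes "packed f"
  shows "lin_ext (word_topology f) = {f}"
proof (intro equalityI subsetI)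
  fix g assume g: "g \<in> lin_ext (word_topology f)"
  then have len: "length g = length f"
    unfolding lin_ext_def top_on_word_topology_iff by simp
  have "g = f"
  proof (rule packed_eqI)
    show "packed g" "packed f" "length g = length f" using g assms len unfolding lin_ext_def by auto
    fix i j assume "i \<in> {1..length g}" "j \<in> {1..length g}"
    then have "letter g i = letter g j \<longleftrightarrow> letter f i = letter f j"
      and "letter f i < letter f j \<longrightarrow> letter g i < letter g j"
      and "letter f j < letter f i \<longrightarrow> letter g j < letter g i"
      using g len unfolding lin_ext_def by (auto simp: tsim_word_topology tlt_word_topology)
    then show "letter g i \<le> letter g j \<longleftrightarrow> letter f i \<le> letter f j" by linarith
  qed
  then show "g \<in> {f}" by simp
qed (use assms in \<open>auto simp: lin_ext_def top_on_word_topology tsim_word_topology tlt_word_topology\<close>)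

lemma word_topology_inj: "packed f \<Longrightarrow> packed g \<Longrightarrow> word_topology f = word_topology g \<Longrightarrow> f = g"
  using lin_ext_word_topology by (metis singleton_inject)

lemma gen_part_word_topology:
  "w \<in> gen_part (word_topology f) \<longleftrightarrow> packed w \<and> length w = length f \<and>
     (\<forall>i\<in>{1..length w}. \<forall>j\<in>{1..length w}. letter f i \<le> letter f j \<longrightarrow> letter w i \<le> letter w j)"
  unfolding gen_part_def top_on_word_topology_iff by (auto simp: tle_word_topology)

lemma finite_packed_words: "finite {w. packed w \<and> length w = n}"
proof (rule finite_subset)
  show "{w. packed w \<and> length w = n} \<subseteq> {w. set w \<subseteq> {1..n} \<and> length w = n}"
    using packed_letters_bounded by fastforce
qed (simp add: finite_lists_length_eq)

lemma finite_lin_ext: "top_on n T \<Longrightarrow> finite (lin_ext T)"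
  by (rule finite_subset[OF _ finite_packed_words[of n]]) (auto simp: lin_ext_def dest: top_on_unique)

lemma finite_gen_part: "top_on n T \<Longrightarrow> finite (gen_part T)"
  by (rule finite_subset[OF _ finite_packed_words[of n]]) (auto simp: gen_part_def dest: top_on_unique)

section \<open>Factoring through \<open>L\<close>\<close>

definition WQSym_map :: "(nat list \<Rightarrow> nat list \<Rightarrow> 'a::field) \<Rightarrow> (nat list \<Rightarrow> 'a) \<Rightarrow> nat list \<Rightarrow> 'a" where
  "WQSym_map G y = (\<lambda>w. \<Sum>v\<in>{v. y v \<noteq> 0}. y v * G v w)"

lemma WQSym_map_eq_sum:
  "finite V \<Longrightarrow> {v. y v \<noteq> 0} \<subseteq> V \<Longrightarrow> WQSym_map G y w = (\<Sum>v\<in>V. y v * G v w)"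
  unfolding WQSym_map_def by (rule sum.mono_neutral_left) auto

lemma finite_support_WQSym: "y \<in> WQSym \<Longrightarrow> finite {v. y v \<noteq> 0}"
  unfolding WQSym_def by simp

lemma linear_endo_WQSym_map:
  assumes G: "\<And>v. packed v \<Longrightarrow> G v \<in> WQSym"
  shows "linear_endo_WQSym (WQSym_map G)"
  unfolding linear_endo_WQSym_def
proof (intro conjI ballI allI)
  fix y :: "nat list \<Rightarrow> 'a" assume y: "y \<in> WQSym"
  have support: "{w. WQSym_map G y w \<noteq> 0} \<subseteq> (\<Union>v\<in>{v. y v \<noteq> 0}. {w. G v w \<noteq> 0})"
  proof
    fix w assume "w \<in> {w. WQSym_map G y w \<noteq> 0}"
    then have "(\<Sum>v\<in>{v. y v \<noteq> 0}. y v * G v w) \<noteq> 0" unfolding WQSym_map_def by simp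
    then obtain v where "y v \<noteq> 0" "y v * G v w \<noteq> 0"
      by (auto elim: sum.not_neutral_contains_not_neutral)
    then show "w \<in> (\<Union>v\<in>{v. y v \<noteq> 0}. {w. G v w \<noteq> 0})" by auto
  qed
  have "G v \<in> WQSym" if "y v \<noteq> 0" for v
    using G y that unfolding WQSym_def by blast
  then show "WQSym_map G y \<in> WQSym"
    using support finite_support_WQSym[OF y] unfolding WQSym_def
    by (auto intro: finite_subset[OF support])
next
  fix x y :: "nat list \<Rightarrow> 'a" assume "x \<in> WQSym" "y \<in> WQSym"
  then have V: "finite ({v. x v \<noteq> 0} \<union> {v. y v \<noteq> 0})" by (simp add: finite_support_WQSym)
  have "{v. x v + y v \<noteq> 0} \<subseteq> {v. x v \<noteq> 0} \<union> {v. y v \<noteq> 0}" by auto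
  then show "WQSym_map G (\<lambda>w. x w + y w) = (\<lambda>w. WQSym_map G x w + WQSym_map G y w)"
    by (intro ext) (simp add: WQSym_map_eq_sum[OF V] distrib_right sum.distrib)
next
  fix c :: 'a and x :: "nat list \<Rightarrow> 'a" assume "x \<in> WQSym"
  then have V: "finite {v. x v \<noteq> 0}" by (rule finite_support_WQSym)
  have "{v. c * x v \<noteq> 0} \<subseteq> {v. x v \<noteq> 0}" by auto
  then show "WQSym_map G (\<lambda>w. c * x w) = (\<lambda>w. c * WQSym_map G x w)"
    by (intro ext) (simp add: WQSym_map_eq_sum[OF V] sum_distrib_left mult.assoc)
qed

lemma WQSym_map_L_map:
  assumes x: "x \<in> HT"
  shows "WQSym_map G (L_map x) w = (\<Sum>T\<in>{T. x T \<noteq> 0}. x T * (\<Sum>f\<in>lin_ext T. G f w))"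
proof -
  define S where "S = {T. x T \<noteq> 0}"
  have S: "finite S" "\<And>T. T \<in> S \<Longrightarrow> finite (lin_ext T)"
    using x finite_lin_ext unfolding S_def HT_def is_fintop_def by auto
  define V where "V = (\<Union>T\<in>S. lin_ext T)"
  have V: "finite V" unfolding V_def using S by auto
  have "{v. L_map x v \<noteq> 0} \<subseteq> V"
  proof
    fix v assume "v \<in> {v. L_map x v \<noteq> 0}"
    then have "(\<Sum>T\<in>S. x T * L_basis T v) \<noteq> 0" unfolding L_map_def S_def by simp
    then obtain T where "T \<in> S" "x T * L_basis T v \<noteq> 0"
      by (rule sum.not_neutral_contains_not_neutral)
    then show "v \<in> V" unfolding V_def L_basis_def by (auto split: if_splits)
  qed
  then have "WQSym_map G (L_map x) w = (\<Sum>v\<in>V. \<Sum>T\<in>S. x T * (L_basis T v * G v w))"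
    by (simp add: WQSym_map_eq_sum[OF V] L_map_def S_def sum_distrib_right mult.assoc)
  also have "\<dots> = (\<Sum>T\<in>S. x T * (\<Sum>v\<in>V. L_basis T v * G v w))"
    by (subst sum.swap) (simp add: sum_distrib_left)
  also have "\<dots> = (\<Sum>T\<in>S. x T * (\<Sum>f\<in>lin_ext T. G f w))"
  proof (rule sum.cong[OF refl])
    fix T assume "T \<in> S"
    then have "lin_ext T \<subseteq> V" unfolding V_def by blast
    then have "(\<Sum>v\<in>V. L_basis T v * G v w) = (\<Sum>v\<in>lin_ext T. L_basis T v * G v w)"
      by (intro sum.mono_neutral_right[OF V]) (auto simp: L_basis_def)
    then show "x T * (\<Sum>v\<in>V. L_basis T v * G v w) = x T * (\<Sum>f\<in>lin_ext T. G f w)"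
      by (simp add: L_basis_def)
  qed
  finally show ?thesis unfolding S_def .
qed

lemma Gamma_basis_in_WQSym: "is_fintop T \<Longrightarrow> Gamma_basis q1 q2 q3 T \<in> WQSym"
  unfolding is_fintop_def WQSym_def
  by (auto intro: finite_subset[OF _ finite_gen_part] simp: Gamma_basis_def gen_part_def split: if_splits)

text \<open>The coefficients of \<open>T - (\<Sum>f\<in>\<L>(T). T\<^sub>f)\<close> in \<open>H\<^sub>T\<close>, where \<open>T\<^sub>f\<close> is the word topology of \<open>f\<close>.\<close>

definition lin_ext_defect :: "nat topology \<Rightarrow> nat topology \<Rightarrow> 'a::field" where
  "lin_ext_defect T S = (if S = T then 1 else 0) - (if S \<in> word_topology ` lin_ext T then 1 else 0)"

lemma sum_lin_ext_defect:
  assumes T: "is_fintop T" "T \<notin> word_topology ` lin_ext T"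
  shows "(\<Sum>S\<in>{S. lin_ext_defect T S \<noteq> (0::'a::field)}. lin_ext_defect T S * h S) =
         h T - (\<Sum>f\<in>lin_ext T. h (word_topology f))"
proof -
  have fin: "finite (lin_ext T)" using T(1) finite_lin_ext unfolding is_fintop_def by blast
  have inj: "inj_on word_topology (lin_ext T)"
    by (rule inj_onI) (auto intro: word_topology_inj simp: lin_ext_def)
  have "{S. lin_ext_defect T S \<noteq> (0::'a)} = insert T (word_topology ` lin_ext T)"
    using T(2) unfolding lin_ext_defect_def by auto
  then have "(\<Sum>S\<in>{S. lin_ext_defect T S \<noteq> (0::'a)}. lin_ext_defect T S * h S) =
      h T + (\<Sum>S\<in>word_topology ` lin_ext T. lin_ext_defect T S * h S)"
    using T(2) fin by (simp add: lin_ext_defect_def)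
  also have "(\<Sum>S\<in>word_topology ` lin_ext T. lin_ext_defect T S * h S) = (\<Sum>S\<in>word_topology ` lin_ext T. - h S)"
    by (rule sum.cong) (use T(2) in \<open>auto simp: lin_ext_defect_def\<close>)
  finally show ?thesis by (simp add: sum.reindex[OF inj] sum_negf)
qed

lemma lin_ext_defect_in_HT:
  assumes T: "is_fintop T"
  shows "lin_ext_defect T \<in> (HT :: (nat topology \<Rightarrow> 'a::field) set)"
proof -
  have "{S. lin_ext_defect T S \<noteq> (0::'a)} \<subseteq> insert T (word_topology ` lin_ext T)"
    unfolding lin_ext_defect_def by auto
  moreover have "finite (lin_ext T)" using T finite_lin_ext unfolding is_fintop_def by blast
  ultimately show ?thesis
    unfolding HT_def using T is_fintop_word_topology by (auto intro: finite_subset)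
qed

lemma L_map_lin_ext_defect:
  assumes "is_fintop T" "T \<notin> word_topology ` lin_ext T"
  shows "L_map (lin_ext_defect T) = (\<lambda>v. 0::'a::field)"
proof
  fix v
  have "finite (lin_ext T)" using assms(1) finite_lin_ext unfolding is_fintop_def by blast
  have "L_map (lin_ext_defect T) v = L_basis T v - (\<Sum>f\<in>lin_ext T. L_basis (word_topology f) v)"
    unfolding L_map_def sum_lin_ext_defect[OF assms] ..
  also have "(\<Sum>f\<in>lin_ext T. L_basis (word_topology f) v) = (\<Sum>f\<in>lin_ext T. if v = f then 1 else 0)"
    by (rule sum.cong) (auto simp: L_basis_def lin_ext_word_topology dest: lin_ext_packed)
  finally show "L_map (lin_ext_defect T) v = 0"
    using \<open>finite (lin_ext T)\<close> by (simp add: L_basis_def)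
qed

lemma linear_endo_WQSym_zero:
  fixes \<phi> :: "(nat list \<Rightarrow> 'a::field) \<Rightarrow> nat list \<Rightarrow> 'a"
  assumes "linear_endo_WQSym \<phi>"
  shows "\<phi> (\<lambda>w. 0) = (\<lambda>w. 0)"
proof -
  have homogeneous: "\<And>c x. x \<in> WQSym \<Longrightarrow> \<phi> (\<lambda>w. c * x w) = (\<lambda>w. c * \<phi> x w)"
    using assms unfolding linear_endo_WQSym_def by blast
  have "\<phi> (\<lambda>w. 0 * 0) = (\<lambda>w. 0 * \<phi> (\<lambda>w. 0) w)"
    by (rule homogeneous) (simp add: WQSym_def)
  then show ?thesis by simp
qed

lemma Gamma_basis_eq_sum_lin_ext_if_factors:
  fixes q1 q2 q3 :: "'a::field"
  assumes \<phi>: "linear_endo_WQSym \<phi>" "\<forall>x\<in>(HT :: (nat topology \<Rightarrow> 'a) set). \<phi> (L_map x) = Gamma_map q1 q2 q3 x"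
    and T: "is_fintop T"
  shows "Gamma_basis q1 q2 q3 T w = (\<Sum>f\<in>lin_ext T. Gamma_basis q1 q2 q3 (word_topology f) w)"
proof (cases "T \<in> word_topology ` lin_ext T")
  case True
  then obtain f where "f \<in> lin_ext T" "T = word_topology f" by blast
  then have "lin_ext T = {f}" by (simp add: lin_ext_word_topology lin_ext_packed)
  with \<open>T = word_topology f\<close> show ?thesis by simp
next
  case False
  have "Gamma_map q1 q2 q3 (lin_ext_defect T) = \<phi> (L_map (lin_ext_defect T))"
    using \<phi>(2) lin_ext_defect_in_HT[OF T, where 'a='a] by simp
  also have "\<dots> = \<phi> (\<lambda>w. 0)" by (simp add: L_map_lin_ext_defect[OF T False])
  finally have "Gamma_map q1 q2 q3 (lin_ext_defect T) = \<phi> (\<lambda>w. 0)" .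
  then have "Gamma_map q1 q2 q3 (lin_ext_defect T) w = 0"
    by (simp add: linear_endo_WQSym_zero[OF \<phi>(1)])
  then show ?thesis unfolding Gamma_map_def sum_lin_ext_defect[OF T False] by simp
qed

lemma factors_through_L_iff:
  fixes q1 q2 q3 :: "'a::field"
  shows "(\<exists>\<phi>. linear_endo_WQSym \<phi> \<and>
            (\<forall>x\<in>(HT :: (nat topology \<Rightarrow> 'a) set). \<phi> (L_map x) = Gamma_map q1 q2 q3 x)) \<longleftrightarrow>
         (\<forall>T w. is_fintop T \<longrightarrow>
            Gamma_basis q1 q2 q3 T w = (\<Sum>f\<in>lin_ext T. Gamma_basis q1 q2 q3 (word_topology f) w))"
    (is "?factors \<longleftrightarrow> ?expands")
proof
  assume ?factors
  then show ?expands using Gamma_basis_eq_sum_lin_ext_if_factors by blast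
next
  assume expands: ?expands
  define \<phi> where "\<phi> = WQSym_map (\<lambda>v. Gamma_basis q1 q2 q3 (word_topology v))"
  have "linear_endo_WQSym \<phi>"
    unfolding \<phi>_def by (intro linear_endo_WQSym_map Gamma_basis_in_WQSym is_fintop_word_topology)
  moreover have "\<phi> (L_map x) = Gamma_map q1 q2 q3 x" if x: "x \<in> HT" for x :: "nat topology \<Rightarrow> 'a"
  proof
    fix w
    have "\<And>T. x T \<noteq> 0 \<Longrightarrow> is_fintop T" using x unfolding HT_def by blast
    then show "\<phi> (L_map x) w = Gamma_map q1 q2 q3 x w"
      unfolding \<phi>_def WQSym_map_L_map[OF x] Gamma_map_def using expands by simp
  qed
  ultimately show ?factors by blast
qed

section \<open>The parameters \<open>(1,0,0)\<close> and \<open>(0,1,0)\<close>\<close>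

lemma gen_part_mono:
  "w \<in> gen_part T \<Longrightarrow> i \<in> {1..length w} \<Longrightarrow> j \<in> {1..length w} \<Longrightarrow> tle T i j \<Longrightarrow>
     letter w i \<le> letter w j"
  unfolding gen_part_def by blast

lemma gen_part_tsim:
  "w \<in> gen_part T \<Longrightarrow> i \<in> {1..length w} \<Longrightarrow> j \<in> {1..length w} \<Longrightarrow> tsim T i j \<Longrightarrow>
     letter w i = letter w j"
  unfolding tsim_def by (meson gen_part_mono order_antisym)

definition ties_ordered :: "(nat \<Rightarrow> nat \<Rightarrow> bool) \<Rightarrow> nat topology \<Rightarrow> nat list \<Rightarrow> bool" where
  "ties_ordered lt T w \<longleftrightarrow> (\<forall>i\<in>{1..length w}. \<forall>j\<in>{1..length w}.
      tlt T i j \<and> letter w i = letter w j \<longrightarrow> lt i j)"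

definition no_interrupted_class :: "(nat \<Rightarrow> nat \<Rightarrow> bool) \<Rightarrow> nat topology \<Rightarrow> nat list \<Rightarrow> bool" where
  "no_interrupted_class lt T w \<longleftrightarrow> (\<forall>i\<in>{1..length w}. \<forall>j\<in>{1..length w}. \<forall>k\<in>{1..length w}.
      \<not> (lt i j \<and> lt j k \<and> tsim T i k \<and> \<not> tsim T i j \<and> \<not> tsim T j k \<and>
         letter w i = letter w j \<and> letter w j = letter w k))"

definition ordered_partition :: "(nat \<Rightarrow> nat \<Rightarrow> bool) \<Rightarrow> nat topology \<Rightarrow> nat list \<Rightarrow> bool" where
  "ordered_partition lt T w \<longleftrightarrow> w \<in> gen_part T \<and> ties_ordered lt T w \<and> no_interrupted_class lt T w"

lemma no_interrupted_class_converse: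
  "no_interrupted_class (\<lambda>i j. lt j i) T w \<longleftrightarrow> no_interrupted_class lt T w"
proof -
  have "no_interrupted_class (\<lambda>i j. r j i) T w" if r: "no_interrupted_class r T w" for r
    unfolding no_interrupted_class_def
  proof (intro ballI notI)
    fix i j k assume ijk: "i \<in> {1..length w}" "j \<in> {1..length w}" "k \<in> {1..length w}"
      and h: "r j i \<and> r k j \<and> tsim T i k \<and> \<not> tsim T i j \<and> \<not> tsim T j k \<and>
        letter w i = letter w j \<and> letter w j = letter w k"
    then have "tsim T k i" "\<not> tsim T k j" "\<not> tsim T j i" using tsim_sym by blast+
    with h ijk show False using r[unfolded no_interrupted_class_def, rule_format, of k j i] by auto
  qed
  from this[of lt] this[of "\<lambda>i j. lt j i"] show ?thesis by auto
qed

lemma ell1_eq_0_iff: "ell1 T w = 0 \<longleftrightarrow> ties_ordered (>) T w"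
proof -
  have fin: "finite {(i, j). i \<in> {1..length w} \<and> j \<in> {1..length w} \<and>
      tlt T i j \<and> i < j \<and> letter w i = letter w j}"
    by (rule finite_subset[of _ "{1..length w} \<times> {1..length w}"]) auto
  have "\<not> (tlt T i j \<and> i < j \<and> e) \<longleftrightarrow> (tlt T i j \<and> e \<longrightarrow> j < i)" for i j e
    by (cases "i = j") auto
  moreover have "ell1 T w = 0 \<longleftrightarrow> (\<forall>i\<in>{1..length w}. \<forall>j\<in>{1..length w}.
      \<not> (tlt T i j \<and> i < j \<and> letter w i = letter w j))"
    unfolding ell1_def card_0_eq[OF fin] by blast
  ultimately show ?thesis unfolding ties_ordered_def by simp
qed

lemma ell2_eq_0_iff: "ell2 T w = 0 \<longleftrightarrow> ties_ordered (<) T w"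
proof -
  have fin: "finite {(i, j). i \<in> {1..length w} \<and> j \<in> {1..length w} \<and>
      tlt T i j \<and> i > j \<and> letter w i = letter w j}"
    by (rule finite_subset[of _ "{1..length w} \<times> {1..length w}"]) auto
  have "\<not> (tlt T i j \<and> i > j \<and> e) \<longleftrightarrow> (tlt T i j \<and> e \<longrightarrow> i < j)" for i j e
    by (cases "i = j") auto
  moreover have "ell2 T w = 0 \<longleftrightarrow> (\<forall>i\<in>{1..length w}. \<forall>j\<in>{1..length w}.
      \<not> (tlt T i j \<and> i > j \<and> letter w i = letter w j))"
    unfolding ell2_def card_0_eq[OF fin] by blast
  ultimately show ?thesis unfolding ties_ordered_def by simp
qed

lemma ell3_eq_0_iff: "ell3 T w = 0 \<longleftrightarrow> no_interrupted_class (<) T w"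
proof -
  have fin: "finite {(i, j, k). i \<in> {1..length w} \<and> j \<in> {1..length w} \<and> k \<in> {1..length w} \<and>
      i < j \<and> j < k \<and> tsim T i k \<and> \<not> tsim T i j \<and> \<not> tsim T j k \<and>
      letter w i = letter w j \<and> letter w j = letter w k}"
    by (rule finite_subset[of _ "{1..length w} \<times> {1..length w} \<times> {1..length w}"]) auto
  show ?thesis
    unfolding ell3_def no_interrupted_class_def card_0_eq[OF fin] by blast
qed

lemma ell3_eq_0_iff_converse: "ell3 T w = 0 \<longleftrightarrow> no_interrupted_class (>) T w"
  using ell3_eq_0_iff no_interrupted_class_converse[of "(<)"] by simp

lemma Gamma_basis_100: "Gamma_basis 1 0 0 T w = (if ordered_partition (<) T w then 1 else 0)"
  unfolding Gamma_basis_def ordered_partition_def ell2_eq_0_iff[symmetric] ell3_eq_0_iff[symmetric]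
  by (simp add: power_0_left)

lemma Gamma_basis_010: "Gamma_basis 0 1 0 T w = (if ordered_partition (>) T w then 1 else 0)"
  unfolding Gamma_basis_def ordered_partition_def ell1_eq_0_iff[symmetric] ell3_eq_0_iff_converse[symmetric]
  by (simp add: power_0_left)

lemma ordered_partition_of_word_topology:
  assumes f: "f \<in> lin_ext T" and w: "ordered_partition lt (word_topology f) w"
  shows "ordered_partition lt T w"
proof -
  have len: "length w = length f" and "packed w" and top: "top_on (length w) T"
    using w f unfolding ordered_partition_def gen_part_word_topology lin_ext_def by auto
  have f_eq: "letter f i = letter f j \<longleftrightarrow> tsim T i j" and f_less: "tlt T i j \<Longrightarrow> letter f i < letter f j"
    if "i \<in> {1..length w}" "j \<in> {1..length w}" for i j
    using f that len unfolding lin_ext_def by auto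
  have tsim_f: "tsim (word_topology f) i j \<longleftrightarrow> tsim T i j"
    and tlt_f: "tlt T i j \<Longrightarrow> tlt (word_topology f) i j"
    if "i \<in> {1..length w}" "j \<in> {1..length w}" for i j
    using f_eq[OF that] f_less[OF that] that len by (auto simp: tsim_word_topology tlt_word_topology)
  have "w \<in> gen_part T"
  proof -
    have "letter f i \<le> letter f j" if "i \<in> {1..length w}" "j \<in> {1..length w}" "tle T i j" for i j
      using that f_eq f_less unfolding tle_iff_tsim_or_tlt by fastforce
    then show ?thesis
      using w \<open>packed w\<close> top unfolding ordered_partition_def gen_part_word_topology
      by (auto simp: gen_part_def)
  qed
  moreover have "ties_ordered lt T w"
    using w tlt_f unfolding ordered_partition_def ties_ordered_def by blast
  moreover have "no_interrupted_class lt T w"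
    using w tsim_f unfolding ordered_partition_def no_interrupted_class_def by blast
  ultimately show ?thesis unfolding ordered_partition_def by blast
qed

locale strict_total_order =
  fixes lt :: "nat \<Rightarrow> nat \<Rightarrow> bool"
  assumes irrefl: "\<not> lt i i"
    and trans: "lt i j \<Longrightarrow> lt j k \<Longrightarrow> lt i k"
    and total: "i \<noteq> j \<Longrightarrow> lt i j \<or> lt j i"
begin

lemma asym: "lt i j \<Longrightarrow> \<not> lt j i"
  using irrefl trans by blast

text \<open>The comparison pattern of the unique linear extension \<open>f\<close> of \<open>T\<close> such that \<open>w\<close> is an
  ordered partition of the word topology of \<open>f\<close>.\<close>

definition tie_break :: "nat topology \<Rightarrow> nat list \<Rightarrow> nat \<Rightarrow> nat \<Rightarrow> bool" where
  "tie_break T w i j \<longleftrightarrow> letter w i < letter w j \<or> letter w i = letter w j \<and> (tsim T i j \<or> lt i j)"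

lemma tie_break_total: "tie_break T w i j \<or> tie_break T w j i"
  unfolding tie_break_def using total[of i j] tsim_sym by (cases "i = j") auto

lemma tsim_or_lt_trans:
  assumes not_interrupted: "\<And>a b c. a \<in> {i, j, k} \<Longrightarrow> b \<in> {i, j, k} \<Longrightarrow> c \<in> {i, j, k} \<Longrightarrow>
      \<not> (lt a b \<and> lt b c \<and> tsim T a c \<and> \<not> tsim T a b \<and> \<not> tsim T b c)"
    and ij: "tsim T i j \<or> lt i j" and jk: "tsim T j k \<or> lt j k"
  shows "tsim T i k \<or> lt i k"
proof (rule ccontr)
  assume not_ik: "\<not> (tsim T i k \<or> lt i k)"
  then have "i \<noteq> k" "\<not> tsim T k i" by (auto dest: tsim_sym)
  then have "lt k i" using total not_ik by blast
  from ij jk show False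
  proof (elim disjE)
    assume "tsim T i j" "tsim T j k"
    then show False using not_ik tsim_trans by blast
  next
    assume "tsim T i j" "lt j k"
    then have "\<not> tsim T j k" using not_ik tsim_trans by blast
    then show False
      using not_interrupted[of j k i] \<open>lt j k\<close> \<open>lt k i\<close> \<open>tsim T i j\<close> \<open>\<not> tsim T k i\<close> tsim_sym by auto
  next
    assume "lt i j" "tsim T j k"
    then have "\<not> tsim T i j" using not_ik tsim_trans by blast
    then show False
      using not_interrupted[of k i j] \<open>lt i j\<close> \<open>lt k i\<close> \<open>tsim T j k\<close> \<open>\<not> tsim T k i\<close> tsim_sym by auto
  next
    assume "lt i j" "lt j k"
    then show False using not_ik trans by blast
  qed
qed

lemma tie_break_trans:
  assumes w: "no_interrupted_class lt T w" and ijk: "i \<in> {1..length w}" "j \<in> {1..length w}" "k \<in> {1..length w}"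
    and ij: "tie_break T w i j" and jk: "tie_break T w j k"
  shows "tie_break T w i k"
proof (cases "letter w i = letter w j \<and> letter w j = letter w k")
  case False
  with ij jk show ?thesis unfolding tie_break_def by auto
next
  case True
  have "\<not> (lt a b \<and> lt b c \<and> tsim T a c \<and> \<not> tsim T a b \<and> \<not> tsim T b c)"
    if "a \<in> {i, j, k}" "b \<in> {i, j, k}" "c \<in> {i, j, k}" for a b c
  proof -
    have "a \<in> {1..length w}" "b \<in> {1..length w}" "c \<in> {1..length w}"
      "letter w a = letter w b" "letter w b = letter w c"
      using that ijk True by auto
    then show ?thesis using w unfolding no_interrupted_class_def by blast
  qed
  moreover have "tsim T i j \<or> lt i j" "tsim T j k \<or> lt j k"
    using ij jk True unfolding tie_break_def by auto
  ultimately have "tsim T i k \<or> lt i k" by (rule tsim_or_lt_trans)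
  then show ?thesis using True unfolding tie_break_def by simp
qed

lemma tie_break_both_iff_tsim:
  assumes "w \<in> gen_part T" "i \<in> {1..length w}" "j \<in> {1..length w}"
  shows "tie_break T w i j \<and> tie_break T w j i \<longleftrightarrow> tsim T i j"
proof
  assume "tie_break T w i j \<and> tie_break T w j i"
  then have "tsim T i j \<or> tsim T j i \<or> lt i j \<and> lt j i" unfolding tie_break_def by auto
  then show "tsim T i j" using asym tsim_sym by blast
next
  assume "tsim T i j"
  then show "tie_break T w i j \<and> tie_break T w j i"
    using gen_part_tsim[OF assms] tsim_sym unfolding tie_break_def by auto
qed

lemma lin_ext_pattern_if_ordered_partition:
  assumes f: "f \<in> lin_ext T" and w: "ordered_partition lt (word_topology f) w"
    and ij: "i \<in> {1..length w}" "j \<in> {1..length w}"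
  shows "letter f i \<le> letter f j \<longleftrightarrow> tie_break T w i j"
proof -
  have len: "length w = length f"
    and mono: "\<And>i j. i \<in> {1..length w} \<Longrightarrow> j \<in> {1..length w} \<Longrightarrow>
        letter f i \<le> letter f j \<Longrightarrow> letter w i \<le> letter w j"
    using w unfolding ordered_partition_def gen_part_word_topology by auto
  have ties: "letter f i < letter f j \<Longrightarrow> letter w i = letter w j \<Longrightarrow> lt i j"
    if "i \<in> {1..length w}" "j \<in> {1..length w}" for i j
    using w that len unfolding ordered_partition_def ties_ordered_def by (auto simp: tlt_word_topology)
  have f_eq: "letter f i = letter f j \<longleftrightarrow> tsim T i j"
    using f ij len unfolding lin_ext_def by auto
  show ?thesis
  proof
    assume "letter f i \<le> letter f j"
    then show "tie_break T w i j"
      using mono[OF ij] mono[OF ij(2,1)] ties[OF ij] f_eq unfolding tie_break_def by fastforce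
  next
    assume tb: "tie_break T w i j"
    show "letter f i \<le> letter f j"
    proof (rule ccontr)
      assume "\<not> letter f i \<le> letter f j"
      then have "letter f j < letter f i" by simp
      then show False
        using tb mono[OF ij(2,1)] ties[OF ij(2,1)] f_eq asym[of i j] tsim_sym
        unfolding tie_break_def by fastforce
    qed
  qed
qed

lemma lin_ext_unique_if_ordered_partition:
  assumes "f \<in> lin_ext T" "ordered_partition lt (word_topology f) w"
    and "g \<in> lin_ext T" "ordered_partition lt (word_topology g) w"
  shows "f = g"
proof (rule packed_eqI)
  have "length w = length f" "length w = length g"
    using assms unfolding ordered_partition_def gen_part_word_topology by auto
  then show "length f = length g"
    and "\<And>i j. i \<in> {1..length f} \<Longrightarrow> j \<in> {1..length f} \<Longrightarrow>
        letter f i \<le> letter f j \<longleftrightarrow> letter g i \<le> letter g j"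
    using lin_ext_pattern_if_ordered_partition assms by auto
qed (use assms lin_ext_packed in auto)

context
  fixes T w f
  assumes w: "ordered_partition lt T w"
    and f: "packed f" "length f = length w"
    and pattern: "\<And>i j. i \<in> {1..length w} \<Longrightarrow> j \<in> {1..length w} \<Longrightarrow>
        letter f i \<le> letter f j \<longleftrightarrow> tie_break T w i j"
begin

lemma tie_break_word_in_lin_ext: "f \<in> lin_ext T"
proof -
  have gen_part: "w \<in> gen_part T" using w unfolding ordered_partition_def by blast
  have "letter f i = letter f j \<longleftrightarrow> tsim T i j" if ij: "i \<in> {1..length w}" "j \<in> {1..length w}" for i j
    using pattern[OF ij] pattern[OF ij(2,1)] tie_break_both_iff_tsim[OF gen_part ij] by auto
  moreover have "letter f i < letter f j" if ij: "i \<in> {1..length w}" "j \<in> {1..length w}"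
    and "tlt T i j" for i j
  proof -
    have "letter w i \<le> letter w j"
      using gen_part_mono[OF gen_part ij] \<open>tlt T i j\<close> unfolding tle_iff_tsim_or_tlt by blast
    moreover have "letter w i = letter w j \<Longrightarrow> lt i j"
      using w ij \<open>tlt T i j\<close> unfolding ordered_partition_def ties_ordered_def by blast
    ultimately show ?thesis
      using pattern[OF ij(2,1)] tlt_not_tsim[OF \<open>tlt T i j\<close>] asym[of i j]
      unfolding tie_break_def by auto
  qed
  moreover have "top_on (length f) T"
    using gen_part f unfolding gen_part_def by simp
  ultimately show ?thesis using f unfolding lin_ext_def by auto
qed

lemma ordered_partition_word_topology_tie_break_word: "ordered_partition lt (word_topology f) w"
proof -
  have tsim_f: "tsim (word_topology f) i j \<longleftrightarrow> tsim T i j"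
    if ij: "i \<in> {1..length w}" "j \<in> {1..length w}" for i j
    using tie_break_word_in_lin_ext ij f unfolding lin_ext_def by (auto simp: tsim_word_topology)
  have "letter w i \<le> letter w j"
    if "i \<in> {1..length w}" "j \<in> {1..length w}" "letter f i \<le> letter f j" for i j
    using pattern that unfolding tie_break_def by fastforce
  moreover have "packed w" using w unfolding ordered_partition_def gen_part_def by blast
  ultimately have "w \<in> gen_part (word_topology f)"
    unfolding gen_part_word_topology using f by simp
  moreover have "ties_ordered lt (word_topology f) w"
    unfolding ties_ordered_def
  proof (intro ballI impI)
    fix i j assume ij: "i \<in> {1..length w}" "j \<in> {1..length w}"
      and tie: "tlt (word_topology f) i j \<and> letter w i = letter w j"
    then have "\<not> tie_break T w j i" using pattern[OF ij(2,1)] f by (auto simp: tlt_word_topology)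
    then show "lt i j" using total[of i j] tie unfolding tie_break_def by (cases "i = j") auto
  qed
  moreover have "no_interrupted_class lt (word_topology f) w"
    using w tsim_f unfolding ordered_partition_def no_interrupted_class_def by simp
  ultimately show ?thesis unfolding ordered_partition_def by blast
qed

end

lemma ex_lin_ext_ordered_partition:
  assumes w: "ordered_partition lt T w"
  shows "\<exists>f\<in>lin_ext T. ordered_partition lt (word_topology f) w"
proof -
  have "no_interrupted_class lt T w" using w unfolding ordered_partition_def by blast
  then obtain f where "packed f" "length f = length w"
    and "\<forall>i\<in>{1..length w}. \<forall>j\<in>{1..length w}. letter f i \<le> letter f j \<longleftrightarrow> tie_break T w i j"
    using packed_word_of_total_preorder[of "length w" "tie_break T w"] tie_break_total tie_break_trans
    by blast
  then show ?thesis
    using tie_break_word_in_lin_ext ordered_partition_word_topology_tie_break_word w by blast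
qed

lemma sum_ordered_partition_lin_ext:
  assumes "finite (lin_ext T)"
  shows "(\<Sum>f\<in>lin_ext T. if ordered_partition lt (word_topology f) w then 1 else 0) =
         (if ordered_partition lt T w then 1 else (0::'a::field))"
proof (cases "ordered_partition lt T w")
  case True
  then obtain f where f: "f \<in> lin_ext T" "ordered_partition lt (word_topology f) w"
    using ex_lin_ext_ordered_partition by blast
  have "ordered_partition lt (word_topology g) w \<longleftrightarrow> g = f" if "g \<in> lin_ext T" for g
    using f that lin_ext_unique_if_ordered_partition by blast
  then have "(\<Sum>g\<in>lin_ext T. if ordered_partition lt (word_topology g) w then 1 else 0) =
        (\<Sum>g\<in>lin_ext T. if g = f then 1 else (0::'a))"
    by (auto intro!: sum.cong)
  then show ?thesis using f True assms by simp
next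
  case False
  then have "\<forall>f\<in>lin_ext T. \<not> ordered_partition lt (word_topology f) w"
    using ordered_partition_of_word_topology by blast
  then show ?thesis using False by simp
qed

end

interpretation increasing: strict_total_order "(<)"
  by unfold_locales auto

interpretation decreasing: strict_total_order "(>)"
  by unfold_locales auto

lemma Gamma_basis_100_eq_sum_lin_ext:
  "is_fintop T \<Longrightarrow>
     Gamma_basis 1 0 0 T w = (\<Sum>f\<in>lin_ext T. Gamma_basis (1::'a::field) 0 0 (word_topology f) w)"
  unfolding Gamma_basis_100 is_fintop_def
  by (auto simp: increasing.sum_ordered_partition_lin_ext finite_lin_ext)

lemma Gamma_basis_010_eq_sum_lin_ext:
  "is_fintop T \<Longrightarrow>
     Gamma_basis 0 1 0 T w = (\<Sum>f\<in>lin_ext T. Gamma_basis (0::'a::field) 1 0 (word_topology f) w)"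
  unfolding Gamma_basis_010 is_fintop_def
  by (auto simp: decreasing.sum_ordered_partition_lin_ext finite_lin_ext)

section \<open>Three small topologies\<close>

lemma constant_word_in_gen_part:
  assumes "top_on (length w) T" "set w = {1}"
  shows "w \<in> gen_part T"
proof -
  have "letter w i = 1" if "i \<in> {1..length w}" for i
    using letter_in_set[OF that] assms(2) by simp
  moreover have "packed w" using assms(2) by (intro packedI[of _ 1]) simp
  ultimately show ?thesis using assms(1) unfolding gen_part_def by simp
qed

lemma Gamma_basis_constant_word:
  "top_on n T \<Longrightarrow> length w = n \<Longrightarrow> set w = {1} \<Longrightarrow>
     Gamma_basis q1 q2 q3 T w = q1 ^ ell1 T w * q2 ^ ell2 T w * q3 ^ ell3 T w"
  unfolding Gamma_basis_def by (simp add: constant_word_in_gen_part)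

lemma ell1_eq_card_filter:
  "ell1 T w = card (set (filter (\<lambda>(i, j). tlt T i j \<and> i < j \<and> letter w i = letter w j)
     (List.product [1..<length w + 1] [1..<length w + 1])))"
  unfolding ell1_def by (rule arg_cong[where f = card]) auto

lemma ell2_eq_card_filter:
  "ell2 T w = card (set (filter (\<lambda>(i, j). tlt T i j \<and> i > j \<and> letter w i = letter w j)
     (List.product [1..<length w + 1] [1..<length w + 1])))"
  unfolding ell2_def by (rule arg_cong[where f = card]) auto

lemma ell3_eq_card_filter:
  "ell3 T w = card (set (filter (\<lambda>(i, j, k). i < j \<and> j < k \<and> tsim T i k \<and> \<not> tsim T i j \<and>
       \<not> tsim T j k \<and> letter w i = letter w j \<and> letter w j = letter w k)
     (List.product [1..<length w + 1] (List.product [1..<length w + 1] [1..<length w + 1]))))"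
  unfolding ell3_def by (rule arg_cong[where f = card]) auto

lemma mem_lin_ext_iff:
  "top_on n T \<Longrightarrow> f \<in> lin_ext T \<longleftrightarrow> packed f \<and> length f = n \<and>
     (\<forall>i\<in>{1..n}. \<forall>j\<in>{1..n}. (letter f i = letter f j \<longleftrightarrow> tsim T i j) \<and> (tlt T i j \<longrightarrow> letter f i < letter f j))"
  unfolding lin_ext_def by (auto dest: top_on_unique)

lemma packed_iff_set: "packed f \<longleftrightarrow> set f = {1..card (set f)}"
  unfolding packed_def by (metis card_atLeastAtMost diff_Suc_1)

lemma packed_iff_upt: "packed f \<longleftrightarrow> set f = set [1..<Suc (card (set f))]"
  unfolding packed_iff_set set_upt atLeastLessThanSuc_atLeastAtMost ..

lemma upto_2: "{1..2::nat} = {1, 2}" by auto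
lemma upto_3: "{1..3::nat} = {1, 2, 3}" by auto

definition discrete_top2 :: "nat topology" where
  "discrete_top2 = upset_topology 2 (=)"

lemma top_on_discrete_top2: "top_on 2 discrete_top2"
  unfolding discrete_top2_def by (rule top_on_upset_topology)

lemma tsim_discrete_top2: "i \<in> {1..2} \<Longrightarrow> j \<in> {1..2} \<Longrightarrow> tsim discrete_top2 i j \<longleftrightarrow> i = j"
  and tlt_discrete_top2: "i \<in> {1..2} \<Longrightarrow> j \<in> {1..2} \<Longrightarrow> \<not> tlt discrete_top2 i j"
  unfolding discrete_top2_def by (auto simp: tsim_upset_topology tlt_upset_topology preorder_upto_def)

lemma lin_ext_discrete_top2: "lin_ext discrete_top2 = {[1, 2], [2, 1]}"
proof (intro equalityI subsetI)
  fix f assume f: "f \<in> lin_ext discrete_top2"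
  then have "length f = 2"
    using top_on_discrete_top2 unfolding lin_ext_def by (auto dest: top_on_unique)
  then obtain a b where ab: "f = [a, b]" by (auto simp: numeral_2_eq_2 length_Suc_conv)
  have "packed [a, b]" "a \<noteq> b"
    using f unfolding ab mem_lin_ext_iff[OF top_on_discrete_top2] upto_2
    by (auto simp: tsim_discrete_top2 letter_def)
  then have "{a, b} = {1..2}" unfolding packed_iff_set by simp
  then have "{a, b} = {1, 2}" unfolding upto_2 .
  then show "f \<in> {[1, 2], [2, 1]}"
    using \<open>a \<noteq> b\<close> ab by (auto simp: doubleton_eq_iff)
next
  fix f :: "nat list" assume "f \<in> {[1, 2], [2, 1]}"
  then show "f \<in> lin_ext discrete_top2"
    unfolding mem_lin_ext_iff[OF top_on_discrete_top2] upto_2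
    by (auto simp: packed_iff_upt tsim_discrete_top2 tlt_discrete_top2 letter_def insert_commute)
qed

lemma discrete_top2_values:
  "Gamma_basis q1 q2 q3 discrete_top2 [1, 1] = 1"
  "(\<Sum>f\<in>lin_ext discrete_top2. Gamma_basis q1 q2 q3 (word_topology f) [1, 1]) = q1 + q2"
  by (simp_all add: lin_ext_discrete_top2 Gamma_basis_constant_word[OF top_on_discrete_top2]
      Gamma_basis_constant_word[OF top_on_word_topology] ell1_eq_card_filter ell2_eq_card_filter
      ell3_eq_card_filter tsim_discrete_top2 tlt_discrete_top2 tsim_word_topology tlt_word_topology letter_def)

definition top_1_lt_3 :: "nat topology" where
  "top_1_lt_3 = upset_topology 3 (\<lambda>i j. i = j \<or> i = 1 \<and> j = 3)"

lemma top_on_top_1_lt_3: "top_on 3 top_1_lt_3"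
  unfolding top_1_lt_3_def by (rule top_on_upset_topology)

lemma preorder_upto_1_lt_3: "preorder_upto 3 (\<lambda>i j. i = j \<or> i = 1 \<and> j = 3)"
  unfolding preorder_upto_def by auto

lemma tsim_top_1_lt_3: "i \<in> {1..3} \<Longrightarrow> j \<in> {1..3} \<Longrightarrow> tsim top_1_lt_3 i j \<longleftrightarrow> i = j"
  using tsim_upset_topology[OF preorder_upto_1_lt_3, of i j] unfolding top_1_lt_3_def by auto

lemma tlt_top_1_lt_3:
  assumes "i \<in> {1..3}" "j \<in> {1..3}"
  shows "tlt top_1_lt_3 i j \<longleftrightarrow> i = 1 \<and> j = 3"
  using tlt_upset_topology[OF preorder_upto_1_lt_3 assms] unfolding top_1_lt_3_def by (cases "i = j") auto

lemma lin_ext_top_1_lt_3: "lin_ext top_1_lt_3 = {[1, 2, 3], [1, 3, 2], [2, 1, 3]}"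
proof (intro equalityI subsetI)
  fix f assume f: "f \<in> lin_ext top_1_lt_3"
  then have "length f = 3"
    using top_on_top_1_lt_3 unfolding lin_ext_def by (auto dest: top_on_unique)
  then obtain a b c where abc: "f = [a, b, c]" by (auto simp: numeral_3_eq_3 length_Suc_conv)
  have "packed [a, b, c]" "a \<noteq> b" "b \<noteq> c" "a < c"
    using f unfolding abc mem_lin_ext_iff[OF top_on_top_1_lt_3] upto_3
    by (auto simp: tsim_top_1_lt_3 tlt_top_1_lt_3 letter_def)
  then have "{a, b, c} = {1..3}" unfolding packed_iff_set by simp
  then have "{a, b, c} = {1, 2, 3}" unfolding upto_3 .
  then have "a \<in> {1, 2, 3}" "b \<in> {1, 2, 3}" "c \<in> {1, 2, 3}" by blast+
  then show "f \<in> {[1, 2, 3], [1, 3, 2], [2, 1, 3]}"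
    using \<open>a \<noteq> b\<close> \<open>b \<noteq> c\<close> \<open>a < c\<close> unfolding abc by auto
next
  fix f :: "nat list" assume "f \<in> {[1, 2, 3], [1, 3, 2], [2, 1, 3]}"
  then show "f \<in> lin_ext top_1_lt_3"
    unfolding mem_lin_ext_iff[OF top_on_top_1_lt_3] upto_3
    by (auto simp: packed_iff_upt tsim_top_1_lt_3 tlt_top_1_lt_3 letter_def insert_commute)
qed

lemma top_1_lt_3_values:
  "Gamma_basis q1 q2 q3 top_1_lt_3 [1, 1, 1] = q1"
  "(\<Sum>f\<in>lin_ext top_1_lt_3. Gamma_basis q1 q2 q3 (word_topology f) [1, 1, 1]) = q1 ^ 3 + 2 * q1 ^ 2 * q2"
  by (simp_all add: lin_ext_top_1_lt_3 Gamma_basis_constant_word[OF top_on_top_1_lt_3]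
      Gamma_basis_constant_word[OF top_on_word_topology] ell1_eq_card_filter ell2_eq_card_filter
      ell3_eq_card_filter tsim_top_1_lt_3 tlt_top_1_lt_3 tsim_word_topology tlt_word_topology letter_def)
    (simp add: algebra_simps power2_eq_square power3_eq_cube)

definition top_1_sim_3 :: "nat topology" where
  "top_1_sim_3 = upset_topology 3 (\<lambda>i j. i = j \<or> i \<noteq> 2 \<and> j \<noteq> 2)"

lemma top_on_top_1_sim_3: "top_on 3 top_1_sim_3"
  unfolding top_1_sim_3_def by (rule top_on_upset_topology)

lemma preorder_upto_1_sim_3: "preorder_upto 3 (\<lambda>i j. i = j \<or> i \<noteq> 2 \<and> j \<noteq> 2)"
  unfolding preorder_upto_def by auto

lemma tsim_top_1_sim_3:
  assumes "i \<in> {1..3}" "j \<in> {1..3}"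
  shows "tsim top_1_sim_3 i j \<longleftrightarrow> i = j \<or> i \<noteq> 2 \<and> j \<noteq> 2"
  using tsim_upset_topology[OF preorder_upto_1_sim_3 assms] unfolding top_1_sim_3_def by auto

lemma tlt_top_1_sim_3:
  assumes "i \<in> {1..3}" "j \<in> {1..3}"
  shows "\<not> tlt top_1_sim_3 i j"
  using tlt_upset_topology[OF preorder_upto_1_sim_3 assms] unfolding top_1_sim_3_def by auto

lemma lin_ext_top_1_sim_3: "lin_ext top_1_sim_3 = {[1, 2, 1], [2, 1, 2]}"
proof (intro equalityI subsetI)
  fix f assume f: "f \<in> lin_ext top_1_sim_3"
  then have "length f = 3"
    using top_on_top_1_sim_3 unfolding lin_ext_def by (auto dest: top_on_unique)
  then obtain a b c where abc: "f = [a, b, c]" by (auto simp: numeral_3_eq_3 length_Suc_conv)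
  have same_letter: "letter f i = letter f j \<longleftrightarrow> tsim top_1_sim_3 i j" if "i \<in> {1..3}" "j \<in> {1..3}" for i j
    using f that \<open>length f = 3\<close> unfolding lin_ext_def by auto
  have "a \<noteq> b" "c = a"
    using same_letter[of 1 2] same_letter[of 1 3] by (simp_all add: abc letter_def tsim_top_1_sim_3)
  moreover have "packed [a, b, c]" using f abc lin_ext_packed by simp
  ultimately have "{a, b} = {1..2}" unfolding packed_iff_set by (simp add: insert_commute)
  then have "{a, b} = {1, 2}" unfolding upto_2 .
  then show "f \<in> {[1, 2, 1], [2, 1, 2]}"
    using \<open>a \<noteq> b\<close> \<open>c = a\<close> unfolding abc by (auto simp: doubleton_eq_iff)
next
  fix f :: "nat list" assume "f \<in> {[1, 2, 1], [2, 1, 2]}"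
  then show "f \<in> lin_ext top_1_sim_3"
    unfolding mem_lin_ext_iff[OF top_on_top_1_sim_3] upto_3
    by (auto simp: packed_iff_upt tsim_top_1_sim_3 tlt_top_1_sim_3 letter_def insert_commute)
qed

lemma top_1_sim_3_values:
  "Gamma_basis q1 q2 q3 top_1_sim_3 [1, 1, 1] = q3"
  "(\<Sum>f\<in>lin_ext top_1_sim_3. Gamma_basis q1 q2 q3 (word_topology f) [1, 1, 1]) = 2 * q1 * q2 * q3"
  by (simp_all add: lin_ext_top_1_sim_3 Gamma_basis_constant_word[OF top_on_top_1_sim_3]
      Gamma_basis_constant_word[OF top_on_word_topology] ell1_eq_card_filter ell2_eq_card_filter
      ell3_eq_card_filter tsim_top_1_sim_3 tlt_top_1_sim_3 tsim_word_topology tlt_word_topology letter_def)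

lemma equations_solutions:
  fixes q1 q2 q3 :: "'a::field"
  assumes "1 = q1 + q2" "q1 = q1 ^ 3 + 2 * q1 ^ 2 * q2" "q3 = 2 * q1 * q2 * q3"
  shows "(q1, q2, q3) = (1, 0, 0) \<or> (q1, q2, q3) = (0, 1, 0)"
proof -
  have q2: "q2 = 1 - q1" using assms(1) by (simp add: algebra_simps)
  have "q1 * (1 - q1) ^ 2 = q1 - (q1 ^ 3 + 2 * q1 ^ 2 * q2)"
    unfolding q2 by (simp add: algebra_simps power2_eq_square power3_eq_cube)
  then have "q1 * (1 - q1) ^ 2 = 0" using assms(2) by simp
  then have "q1 = 0 \<or> q1 = 1" by simp
  then show ?thesis using q2 assms(3) by auto
qed

theorem proposition21:
  fixes q1 q2 q3 :: "'a::field"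
  shows "(\<exists>\<phi>. linear_endo_WQSym \<phi> \<and>
            (\<forall>x\<in>(HT :: (nat topology \<Rightarrow> 'a) set). \<phi> (L_map x) = Gamma_map q1 q2 q3 x))
         \<longleftrightarrow> (q1, q2, q3) = (1, 0, 0) \<or> (q1, q2, q3) = (0, 1, 0)"
  unfolding factors_through_L_iff
proof (intro iffI)
  assume expands: "\<forall>T w. is_fintop T \<longrightarrow>
    Gamma_basis q1 q2 q3 T w = (\<Sum>f\<in>lin_ext T. Gamma_basis q1 q2 q3 (word_topology f) w)"
  have "is_fintop discrete_top2" "is_fintop top_1_lt_3" "is_fintop top_1_sim_3"
    unfolding is_fintop_def using top_on_discrete_top2 top_on_top_1_lt_3 top_on_top_1_sim_3 by blast+
  then have "1 = q1 + q2" "q1 = q1 ^ 3 + 2 * q1 ^ 2 * q2" "q3 = 2 * q1 * q2 * q3"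
    using expands discrete_top2_values top_1_lt_3_values top_1_sim_3_values by metis+
  then show "(q1, q2, q3) = (1, 0, 0) \<or> (q1, q2, q3) = (0, 1, 0)"
    by (rule equations_solutions)
next
  assume "(q1, q2, q3) = (1, 0, 0) \<or> (q1, q2, q3) = (0, 1, 0)"
  then show "\<forall>T w. is_fintop T \<longrightarrow>
    Gamma_basis q1 q2 q3 T w = (\<Sum>f\<in>lin_ext T. Gamma_basis q1 q2 q3 (word_topology f) w)"
    using Gamma_basis_100_eq_sum_lin_ext Gamma_basis_010_eq_sum_lin_ext by auto
qed

end
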